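(* Let $A$ and $B$ be pure parabolic isometries of $\mathbb{H}^4$. Then $A$ and $B$ are linked.
   Context: A pure parabolic isometry of $\mathbb{H}^4$ is a composition of reflections in two hyperplanes tangent at a unique point at infinity. Two isometries $A,B$ are linked if there are involutions $\alpha,\beta,\gamma$ of $\mathbb{H}^4$ with $A=\alpha\beta$ and $B=\beta\gamma$. *)

theory Defs
  imports "HOL-Analysis.Analysis"
begin

text \<open>Hyperboloid model of hyperbolic 4-space inside Minkowski space R^(4,1),
  realised as real^5; coordinate 0 is the time-like coordinate.\<close>

definition mink :: "real^5 \<Rightarrow> real^5 \<Rightarrow> real" where
  "mink x y = (\<Sum>i\<in>UNIV. (if i = 0 then -1 else 1) * (x $ i) * (y $ i))"

definition H4 :: "(real^5) set" where
  "H4 = {x. mink x x = -1 \<and> x $ 0 > 0}"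

text \<open>Points at infinity: future null directions, normalised by time coordinate 1.\<close>
definition ideal_pts :: "(real^5) set" where
  "ideal_pts = {p. mink p p = 0 \<and> p $ 0 = 1}"

text \<open>Isometries of H^4 (w.r.t. the hyperbolic distance arcosh(-<x,y>)):
  bijections of H4 preserving the Minkowski form on H4. Maps are only
  relevant through their values on H4.\<close>
definition isometry :: "(real^5 \<Rightarrow> real^5) \<Rightarrow> bool" where
  "isometry f \<longleftrightarrow> bij_betw f H4 H4 \<and> (\<forall>x\<in>H4. \<forall>y\<in>H4. mink (f x) (f y) = mink x y)"

definition involution :: "(real^5 \<Rightarrow> real^5) \<Rightarrow> bool" where
  "involution f \<longleftrightarrow> isometry f \<and> (\<forall>x\<in>H4. f (f x) = x) \<and> (\<exists>x\<in>H4. f x \<noteq> x)"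

definition unit_spacelike :: "real^5 \<Rightarrow> bool" where
  "unit_spacelike n \<longleftrightarrow> mink n n = 1"

definition hyperplane :: "real^5 \<Rightarrow> (real^5) set" where
  "hyperplane n = {x\<in>H4. mink x n = 0}"

definition ideal_boundary :: "real^5 \<Rightarrow> (real^5) set" where
  "ideal_boundary n = {p\<in>ideal_pts. mink p n = 0}"

definition refl :: "real^5 \<Rightarrow> real^5 \<Rightarrow> real^5" where
  "refl n x = x - (2 * mink x n) *\<^sub>R n"

definition pure_parabolic :: "(real^5 \<Rightarrow> real^5) \<Rightarrow> bool" where
  "pure_parabolic A \<longleftrightarrow>
     (\<exists>n1 n2. unit_spacelike n1 \<and> unit_spacelike n2 \<and>
        hyperplane n1 \<inter> hyperplane n2 = {} \<and>
        (\<exists>!p. p \<in> ideal_boundary n1 \<inter> ideal_boundary n2) \<and>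
        (\<forall>x\<in>H4. A x = refl n1 (refl n2 x)))"

definition linked :: "(real^5 \<Rightarrow> real^5) \<Rightarrow> (real^5 \<Rightarrow> real^5) \<Rightarrow> bool" where
  "linked A B \<longleftrightarrow> (\<exists>\<alpha> \<beta> \<gamma>. involution \<alpha> \<and> involution \<beta> \<and> involution \<gamma> \<and>
     (\<forall>x\<in>H4. A x = \<alpha> (\<beta> x) \<and> B x = \<beta> (\<gamma> x)))"

end

theory Submission
  imports Defs
begin

text \<open>A pure parabolic map is refl n \<circ> refl (n + q) for a null vector q orthogonal to the
  unit normal n; the ideal point of q is its fixed point. For two such maps A, B with
  null vectors q, r choose a null vector v with mink q v \<noteq> 0 such that r is a multiple
  of q or of v (take v = r if mink q r \<noteq> 0; otherwise r is parallel to q). The half-turn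
  \<beta> about the geodesic with ideal endpoints q and v fixes q and r and sends n to -n
  modulo q (and similarly for B), so it conjugates A and B to their inverses. Hence
  \<alpha> = A\<beta> and \<gamma> = \<beta>B are involutions with A = \<alpha>\<beta> and B = \<beta>\<gamma>.\<close>

section \<open>Minkowski space\<close>

lemma mink_eq_inner: "mink x y = inner x y - 2 * x$0 * y$0"
proof -
  have "mink x y = (\<Sum>i\<in>UNIV. x$i * y$i - (if i = 0 then 2 * x$i * y$i else 0))"
    unfolding mink_def by (rule sum.cong) auto
  also have "\<dots> = inner x y - 2 * x$0 * y$0"
    by (simp add: sum_subtractf inner_vec_def sum.If_cases)
  finally show ?thesis .
qed

lemma mink_commute: "mink x y = mink y x"
  by (simp add: mink_eq_inner inner_commute)

lemma mink_add_left [simp]: "mink (x + y) z = mink x z + mink y z"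
  and mink_add_right [simp]: "mink z (x + y) = mink z x + mink z y"
  and mink_diff_left [simp]: "mink (x - y) z = mink x z - mink y z"
  and mink_diff_right [simp]: "mink z (x - y) = mink z x - mink z y"
  and mink_minus_left [simp]: "mink (- x) z = - mink x z"
  and mink_minus_right [simp]: "mink z (- x) = - mink z x"
  and mink_scaleR_left [simp]: "mink (c *\<^sub>R x) z = c * mink x z"
  and mink_scaleR_right [simp]: "mink z (c *\<^sub>R x) = c * mink z x"
  and mink_zero_left [simp]: "mink 0 z = 0"
  and mink_zero_right [simp]: "mink z 0 = 0"
  by (simp_all add: mink_eq_inner inner_add_left inner_add_right inner_diff_left
      inner_diff_right algebra_simps)

definition e0 :: "real^5" where "e0 = axis 0 1"

definition space_part :: "real^5 \<Rightarrow> real^5" where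
  "space_part x = x - (x$0) *\<^sub>R e0"

lemma e0_time: "e0$0 = 1"
  by (simp add: e0_def axis_def)

lemma mink_e0_left: "mink e0 x = - x$0"
proof -
  have "inner e0 x = x$0" by (simp add: e0_def inner_axis')
  thus ?thesis by (simp add: mink_eq_inner e0_time)
qed

lemma mink_space_part: "mink x y = inner (space_part x) (space_part y) - x$0 * y$0"
proof -
  have l: "inner e0 z = z$0" and r: "inner z e0 = z$0" for z
    by (simp_all add: e0_def inner_axis inner_axis')
  show ?thesis
    by (simp add: space_part_def mink_eq_inner inner_diff_left inner_diff_right l r
        e0_time algebra_simps)
qed

lemma e0_in_H4: "e0 \<in> H4"
  by (simp add: H4_def mink_e0_left e0_time)

lemma H4_mink_self: "x \<in> H4 \<Longrightarrow> mink x x = -1"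
  by (simp add: H4_def)

lemma null_eq_zero_if_time_zero: "mink q q = 0 \<Longrightarrow> q$0 = 0 \<Longrightarrow> q = 0"
  by (simp add: mink_space_part space_part_def)

lemma null_time_nonzero: "mink q q = 0 \<Longrightarrow> q \<noteq> 0 \<Longrightarrow> q$0 \<noteq> 0"
  using null_eq_zero_if_time_zero by blast

lemma orth_null_nonneg:
  assumes "mink q q = 0" "q \<noteq> 0" "mink w q = 0"
  shows "mink w w \<ge> 0"
proof -
  have q0: "q$0 \<noteq> 0" using null_time_nonzero assms(1,2) .
  have qq: "inner (space_part q) (space_part q) = (q$0)^2"
    using assms(1) by (simp add: mink_space_part power2_eq_square)
  have wq: "inner (space_part w) (space_part q) = w$0 * q$0"
    using assms(3) by (simp add: mink_space_part)
  have "(w$0 * q$0)^2 \<le> inner (space_part w) (space_part w) * (q$0)^2"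
    using Cauchy_Schwarz_ineq[of "space_part w" "space_part q"] by (simp add: qq wq)
  hence "(w$0)^2 \<le> inner (space_part w) (space_part w)"
    using q0 by (simp add: power_mult_distrib)
  thus ?thesis by (simp add: mink_space_part power2_eq_square)
qed

lemma null_orth_null_parallel:
  assumes "mink q q = 0" "q \<noteq> 0" "mink r r = 0" "mink q r = 0"
  shows "r = (r$0 / q$0) *\<^sub>R q"
proof -
  have q0: "q$0 \<noteq> 0" using null_time_nonzero assms(1,2) .
  define w where "w = (q$0) *\<^sub>R r - (r$0) *\<^sub>R q"
  have "mink w w = 0" using assms by (simp add: w_def mink_commute[of r q])
  moreover have "w$0 = 0" by (simp add: w_def)
  ultimately have "w = 0" by (rule null_eq_zero_if_time_zero)
  hence "(q$0) *\<^sub>R r = (r$0) *\<^sub>R q" by (simp add: w_def)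
  hence "(1 / q$0) *\<^sub>R (q$0) *\<^sub>R r = (1 / q$0) *\<^sub>R (r$0) *\<^sub>R q" by simp
  thus ?thesis using q0 by simp
qed

lemma norm_space_part_less:
  assumes "mink x x = -1"
  shows "norm (space_part x) < \<bar>x$0\<bar>"
proof -
  have "(norm (space_part x))^2 = (x$0)^2 - 1"
    using assms unfolding power2_norm_eq_inner by (simp add: mink_space_part power2_eq_square)
  hence "(norm (space_part x))^2 < \<bar>x$0\<bar>^2" by simp
  thus ?thesis by (rule power2_less_imp_less) simp
qed

text \<open>Unit time-like vectors in opposite time cones have positive Minkowski product.\<close>
lemma in_H4_if_mink_neg:
  assumes x: "x \<in> H4" and yy: "mink y y = -1" and xy: "mink x y < 0"
  shows "y \<in> H4"
proof (rule ccontr)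
  assume "y \<notin> H4"
  hence y0: "y$0 \<le> 0" using yy by (auto simp: H4_def)
  have x0: "x$0 > 0" and xx: "mink x x = -1" using x by (auto simp: H4_def)
  have "- inner (space_part x) (space_part y) \<le> norm (space_part x) * norm (space_part y)"
    using Cauchy_Schwarz_ineq2[of "space_part x" "space_part y"] by linarith
  also have "\<dots> < x$0 * (- y$0)"
    using norm_space_part_less[OF xx] norm_space_part_less[OF yy] x0 y0
    by (intro mult_strict_mono) auto
  finally have "mink x y > 0" by (simp add: mink_space_part)
  thus False using xy by simp
qed

section \<open>Isometries and involutions\<close>

lemma isometry_maps_H4: "isometry f \<Longrightarrow> x \<in> H4 \<Longrightarrow> f x \<in> H4"
  unfolding isometry_def using bij_betwE by blast

lemma isometry_cong: "(\<And>x. x \<in> H4 \<Longrightarrow> f x = g x) \<Longrightarrow> isometry f = isometry g"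
  unfolding isometry_def by (simp add: bij_betw_cong[of H4 f g] cong: ball_cong)

lemma isometry_comp:
  assumes "isometry f" "isometry g"
  shows "isometry (f \<circ> g)"
proof -
  have "bij_betw (f \<circ> g) H4 H4"
    using assms by (intro bij_betw_trans[of g _ H4]) (simp_all add: isometry_def)
  thus ?thesis
    using assms isometry_maps_H4[OF assms(2)] by (simp add: isometry_def)
qed

lemma isometry_if_involutive:
  assumes "\<And>x. x \<in> H4 \<Longrightarrow> f x \<in> H4" "\<And>x. x \<in> H4 \<Longrightarrow> f (f x) = x"
    "\<And>x y. x \<in> H4 \<Longrightarrow> y \<in> H4 \<Longrightarrow> mink (f x) (f y) = mink x y"
  shows "isometry f"
proof -
  have "bij_betw f H4 H4"
    by (rule bij_betw_byWitness[where f' = f]) (use assms in blast)+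
  thus ?thesis using assms(3) by (simp add: isometry_def)
qed

lemma involutionI:
  assumes "isometry f" "\<And>x. x \<in> H4 \<Longrightarrow> f (f x) = x" "\<not> (\<forall>x\<in>H4. f x = x)"
  shows "involution f"
  using assms unfolding involution_def by blast

text \<open>The involutions are \<alpha> = A\<beta> and \<gamma> = \<beta>B; none of \<beta>, \<alpha>, \<gamma> is the identity,
  since otherwise A or B would be involutive.\<close>
lemma linked_if_inverted_by_involutive:
  assumes iso: "isometry A" "isometry B" "isometry \<beta>"
    and \<beta>\<beta>: "\<And>x. x \<in> H4 \<Longrightarrow> \<beta> (\<beta> x) = x"
    and A_inv: "\<And>x. x \<in> H4 \<Longrightarrow> A (\<beta> (A (\<beta> x))) = x"
    and B_inv: "\<And>x. x \<in> H4 \<Longrightarrow> \<beta> (B (\<beta> (B x))) = x"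
    and A_not_inv: "\<not> (\<forall>x\<in>H4. A (A x) = x)"
    and B_not_inv: "\<not> (\<forall>x\<in>H4. B (B x) = x)"
  shows "linked A B"
proof -
  define \<alpha> where "\<alpha> = A \<circ> \<beta>"
  define \<gamma> where "\<gamma> = \<beta> \<circ> B"
  have A_H4: "A z \<in> H4" and \<beta>_H4: "\<beta> z \<in> H4" if "z \<in> H4" for z
    using that iso by (simp_all add: isometry_maps_H4)
  have A_eq: "A z = \<alpha> (\<beta> z)" if "z \<in> H4" for z
    using that by (simp add: \<alpha>_def \<beta>\<beta>)
  have B_eq: "B z = \<beta> (\<gamma> z)" if "z \<in> H4" for z
    using that iso(2) by (simp add: \<gamma>_def \<beta>\<beta> isometry_maps_H4)
  have "involution \<beta>"
  proof (rule involutionI[OF iso(3) \<beta>\<beta>])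
    show "\<not> (\<forall>x\<in>H4. \<beta> x = x)"
    proof
      assume "\<forall>x\<in>H4. \<beta> x = x"
      hence "A (A z) = z" if "z \<in> H4" for z
        using A_inv[OF that] that A_H4[OF that] by simp
      thus False using A_not_inv by blast
    qed
  qed
  moreover have "involution \<alpha>"
  proof (rule involutionI)
    show "isometry \<alpha>" unfolding \<alpha>_def using iso(1,3) by (rule isometry_comp)
    show "\<alpha> (\<alpha> z) = z" if "z \<in> H4" for z
      using A_inv that by (simp add: \<alpha>_def)
    show "\<not> (\<forall>x\<in>H4. \<alpha> x = x)"
    proof
      assume "\<forall>x\<in>H4. \<alpha> x = x"
      hence A_\<beta>: "A z = \<beta> z" if "z \<in> H4" for z using that A_eq \<beta>_H4 by simp
      have "A (A z) = z" if "z \<in> H4" for z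
        using that by (simp add: A_\<beta> \<beta>_H4 \<beta>\<beta>)
      thus False using A_not_inv by blast
    qed
  qed
  moreover have "involution \<gamma>"
  proof (rule involutionI)
    show "isometry \<gamma>" unfolding \<gamma>_def using iso(3,2) by (rule isometry_comp)
    show "\<gamma> (\<gamma> z) = z" if "z \<in> H4" for z
      using B_inv that by (simp add: \<gamma>_def)
    show "\<not> (\<forall>x\<in>H4. \<gamma> x = x)"
    proof
      assume "\<forall>x\<in>H4. \<gamma> x = x"
      hence B_\<beta>: "B z = \<beta> z" if "z \<in> H4" for z using that B_eq by simp
      have "B (B z) = z" if "z \<in> H4" for z
        using that by (simp add: B_\<beta> \<beta>_H4 \<beta>\<beta>)
      thus False using B_not_inv by blast
    qed
  qed
  ultimately show ?thesis
    unfolding linked_def using A_eq B_eq by blast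
qed

section \<open>Reflections and parabolic maps\<close>

lemma refl_mink:
  assumes "mink n n = 1"
  shows "mink (refl n x) (refl n y) = mink x y"
  using assms by (simp add: refl_def mink_commute[of n x] mink_commute[of n y] algebra_simps)

lemma refl_refl: "mink n n = 1 \<Longrightarrow> refl n (refl n x) = x"
  by (simp add: refl_def algebra_simps)

lemma refl_in_H4:
  assumes n: "mink n n = 1" and x: "x \<in> H4"
  shows "refl n x \<in> H4"
proof (rule in_H4_if_mink_neg[OF x])
  show "mink (refl n x) (refl n x) = -1" using n x by (simp add: refl_mink H4_mink_self)
  have "mink x (refl n x) = -1 - 2 * (mink x n)^2"
    using x by (simp add: refl_def H4_mink_self mink_commute[of n x] power2_eq_square)
  also have "\<dots> < 0" using zero_le_power2[of "mink x n"] by linarith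
  finally show "mink x (refl n x) < 0" .
qed

lemma isometry_refl: "mink n n = 1 \<Longrightarrow> isometry (refl n)"
  by (rule isometry_if_involutive) (simp_all add: refl_in_H4 refl_refl refl_mink)

lemma refl_scaleR_unit: "c^2 = 1 \<Longrightarrow> refl (c *\<^sub>R n) = refl n"
  by (simp add: refl_def fun_eq_iff power2_eq_square)

definition parabolic :: "real^5 \<Rightarrow> real^5 \<Rightarrow> real^5 \<Rightarrow> real^5" where
  "parabolic n q x = refl n (refl (n + q) x)"

text \<open>The unit normals n and n + q of two hyperplanes tangent at the ideal point of the
  null vector q.\<close>
locale tangent_normals =
  fixes n q :: "real^5"
  assumes unit: "mink n n = 1" and orth: "mink n q = 0" and null: "mink q q = 0"
    and nonzero: "q \<noteq> 0"
begin

lemma orth': "mink q n = 0"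
  using orth by (simp add: mink_commute[of q n])

lemma unit_shift: "mink (n + q) (n + q) = 1"
  using unit orth orth' null by simp

lemma isometry_parabolic: "isometry (parabolic n q)"
proof -
  have "parabolic n q = refl n \<circ> refl (n + q)" by (simp add: parabolic_def fun_eq_iff)
  thus ?thesis using isometry_comp[OF isometry_refl[OF unit] isometry_refl[OF unit_shift]] by simp
qed

lemma parabolic_inverse:
  "refl (n + q) (refl n (parabolic n q x)) = x" "parabolic n q (refl (n + q) (refl n x)) = x"
  by (simp_all add: parabolic_def refl_refl[OF unit] refl_refl[OF unit_shift])

lemma parabolic_eq:
  "parabolic n q x = x + (2 * mink x q) *\<^sub>R n - (2 * (mink x n + mink x q)) *\<^sub>R q"
  using unit null orth orth' by (simp add: parabolic_def refl_def vec_eq_iff algebra_simps)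

lemma parabolic_inverse_eq:
  "refl (n + q) (refl n x) = x - (2 * mink x q) *\<^sub>R n + (2 * (mink x n - mink x q)) *\<^sub>R q"
  using unit null orth orth' by (simp add: refl_def vec_eq_iff algebra_simps)

text \<open>The map shifts mink x n by 2 mink x q and fixes mink x q, which is non-zero on H4.\<close>
lemma parabolic_not_involutive: "parabolic n q (parabolic n q e0) \<noteq> e0"
proof
  assume twice: "parabolic n q (parabolic n q e0) = e0"
  have n_shift: "mink (parabolic n q x) n = mink x n + 2 * mink x q"
    and q_fixed: "mink (parabolic n q x) q = mink x q" for x
    using unit null orth orth' by (simp_all add: parabolic_eq)
  have "mink e0 n = mink e0 n + 4 * mink e0 q"
    using n_shift[of "parabolic n q e0"] by (simp add: twice n_shift q_fixed)
  thus False using null_time_nonzero[OF null nonzero] by (simp add: mink_e0_left)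
qed

end

section \<open>Half-turns\<close>

text \<open>For null vectors u, v with mink u v \<noteq> 0, the half-turn about the geodesic with
  ideal endpoints u and v: the identity on span {u, v}, minus the identity on its
  Minkowski-orthogonal complement.\<close>
definition half_turn :: "real^5 \<Rightarrow> real^5 \<Rightarrow> real^5 \<Rightarrow> real^5" where
  "half_turn u v x = - x + (2 / mink u v) *\<^sub>R (mink x v *\<^sub>R u + mink x u *\<^sub>R v)"

lemma half_turn_commute: "half_turn u v = half_turn v u"
  by (simp add: half_turn_def fun_eq_iff mink_commute[of u v] add.commute)

lemma half_turn_add: "half_turn u v (x + y) = half_turn u v x + half_turn u v y"
  and half_turn_diff: "half_turn u v (x - y) = half_turn u v x - half_turn u v y"
  and half_turn_scaleR: "half_turn u v (c *\<^sub>R x) = c *\<^sub>R half_turn u v x"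
  by (simp_all add: half_turn_def algebra_simps)

locale null_frame =
  fixes u v :: "real^5"
  assumes null_u: "mink u u = 0" and null_v: "mink v v = 0" and uv: "mink u v \<noteq> 0"
begin

lemma vu: "mink v u = mink u v"
  by (simp add: mink_commute)

lemma half_turn_mink: "mink (half_turn u v x) (half_turn u v y) = mink x y"
  using null_u null_v uv
  by (simp add: half_turn_def vu mink_commute[of u x] mink_commute[of v x]
      mink_commute[of u y] mink_commute[of v y] mink_commute[of y x] algebra_simps field_simps)

lemma half_turn_half_turn: "half_turn u v (half_turn u v x) = x"
  using null_u null_v uv by (simp add: half_turn_def vu vec_eq_iff algebra_simps field_simps)

lemma half_turn_fixes: "half_turn u v (c *\<^sub>R u) = c *\<^sub>R u"
  using null_u uv by (simp add: half_turn_def vu vec_eq_iff algebra_simps)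

lemma half_turn_orth:
  "mink x u = 0 \<Longrightarrow> half_turn u v x = - x + (2 * mink x v / mink u v) *\<^sub>R u"
  by (simp add: half_turn_def)

text \<open>Projecting x \<in> H4 to the orthogonal complement of span {u, v} gives a vector
  orthogonal to the null vector u, hence of non-negative square; this bounds the
  span-component of x and makes mink x (half_turn u v x) negative.\<close>
lemma half_turn_in_H4:
  assumes x: "x \<in> H4"
  shows "half_turn u v x \<in> H4"
proof (rule in_H4_if_mink_neg[OF x])
  define k a b where "k = mink u v" and "a = mink x u" and "b = mink x v"
  have xx: "mink x x = -1" using x by (rule H4_mink_self)
  have k: "k \<noteq> 0" using uv by (simp add: k_def)
  define w where "w = x - (1/k) *\<^sub>R (b *\<^sub>R u + a *\<^sub>R v)"
  have xu: "mink u x = a" "mink v x = b" by (simp_all add: a_def b_def mink_commute)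
  have "mink w u = 0"
    using null_u k by (simp add: w_def a_def[symmetric] vu k_def[symmetric])
  hence "mink w w \<ge> 0"
    using orth_null_nonneg[OF null_u] uv by fastforce
  moreover have "mink w w = -1 - 2 * (a * b / k)"
    using null_u null_v k xx
    by (simp add: w_def xu a_def[symmetric] b_def[symmetric] vu k_def[symmetric]
        algebra_simps field_simps)
  moreover have "mink x (half_turn u v x) = 1 + 4 * (a * b / k)"
    using xx by (simp add: half_turn_def a_def[symmetric] b_def[symmetric] k_def[symmetric]
        algebra_simps field_simps)
  ultimately show "mink x (half_turn u v x) < 0" by linarith
  show "mink (half_turn u v x) (half_turn u v x) = -1" using xx by (simp add: half_turn_mink)
qed

lemma isometry_half_turn: "isometry (half_turn u v)"
  by (rule isometry_if_involutive) (simp_all add: half_turn_in_H4 half_turn_half_turn half_turn_mink)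

end

lemma null_frame_swap: "null_frame u v \<Longrightarrow> null_frame v u"
  by (simp add: null_frame_def mink_commute[of u v])

lemma null_frame_reflected_partner:
  assumes "mink q q = 0" "q \<noteq> 0"
  shows "null_frame q ((2 * q$0) *\<^sub>R e0 - q)"
proof -
  have q0: "q$0 \<noteq> 0" using null_time_nonzero assms .
  have e0: "mink e0 e0 = -1" "mink e0 q = - q$0" "mink q e0 = - q$0"
    by (simp_all add: mink_e0_left e0_time mink_commute[of q e0])
  show ?thesis
    using assms q0 by unfold_locales (simp_all add: e0 algebra_simps power2_eq_square)
qed

lemma exists_null_frame:
  assumes q: "mink q q = 0" "q \<noteq> 0" and r: "mink r r = 0"
  shows "\<exists>v d. null_frame q v \<and> (r = d *\<^sub>R q \<or> r = d *\<^sub>R v)"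
proof (cases "mink q r = 0")
  case True
  hence "r = (r$0 / q$0) *\<^sub>R q" using null_orth_null_parallel q r by blast
  thus ?thesis using null_frame_reflected_partner[OF q] by blast
next
  case False
  hence "null_frame q r" using q r by unfold_locales
  thus ?thesis by (metis scaleR_one)
qed

context tangent_normals
begin

text \<open>The half-turn fixes q and maps n to -n modulo q, so it conjugates the parabolic
  map to its inverse.\<close>
lemma half_turn_conj_parabolic:
  assumes "null_frame u v" and q: "q = c *\<^sub>R u"
  shows "half_turn u v (parabolic n q (half_turn u v x)) = refl (n + q) (refl n x)"
proof -
  interpret null_frame u v by fact
  let ?\<beta> = "half_turn u v"
  have c: "c \<noteq> 0" using nonzero q by auto
  have \<beta>q: "?\<beta> q = q" using q half_turn_fixes by simp
  have "mink n u = 0" using orth q c by simp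
  then obtain s where \<beta>n: "?\<beta> n = - n + s *\<^sub>R q"
    using half_turn_orth q c by (intro that[of "2 * mink n v / mink u v / c"]) simp
  have \<beta>x_q: "mink (?\<beta> x) q = mink x q"
    using half_turn_mink[of x q] \<beta>q by simp
  have \<beta>x_n: "mink (?\<beta> x) n = - mink x n + s * mink x q"
    using half_turn_mink[of "?\<beta> x" n] \<beta>n by (simp add: half_turn_half_turn)
  show ?thesis
    by (simp add: parabolic_eq parabolic_inverse_eq half_turn_add half_turn_diff
        half_turn_scaleR half_turn_half_turn \<beta>q \<beta>n \<beta>x_q \<beta>x_n vec_eq_iff algebra_simps)
qed

end

lemma linked_if_common_half_turn:
  assumes nq: "tangent_normals n q" and mr: "tangent_normals m r" and frame: "null_frame u v"
    and q: "q = c *\<^sub>R u" and r: "r = d *\<^sub>R u \<or> r = d *\<^sub>R v"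
    and A: "\<forall>x\<in>H4. A x = parabolic n q x" and B: "\<forall>x\<in>H4. B x = parabolic m r x"
  shows "linked A B"
proof -
  interpret N: tangent_normals n q by fact
  interpret M: tangent_normals m r by fact
  interpret null_frame u v by fact
  let ?\<beta> = "half_turn u v"
  have conj_A: "?\<beta> (parabolic n q (?\<beta> x)) = refl (n + q) (refl n x)" for x
    using N.half_turn_conj_parabolic[OF frame q] .
  have conj_B: "?\<beta> (parabolic m r (?\<beta> x)) = refl (m + r) (refl m x)" for x
    using r M.half_turn_conj_parabolic[OF frame] M.half_turn_conj_parabolic[OF null_frame_swap[OF frame]]
    by (auto simp: half_turn_commute[of v u])
  have iso_A: "isometry A" and iso_B: "isometry B"
    using isometry_cong A B N.isometry_parabolic M.isometry_parabolic by blast+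
  have \<beta>_H4: "?\<beta> x \<in> H4" and A_H4: "A x \<in> H4" and B_H4: "B x \<in> H4" if "x \<in> H4" for x
    using that half_turn_in_H4 isometry_maps_H4 iso_A iso_B by blast+
  show ?thesis
  proof (rule linked_if_inverted_by_involutive[OF iso_A iso_B isometry_half_turn])
    show "?\<beta> (?\<beta> x) = x" for x by (rule half_turn_half_turn)
    show "A (?\<beta> (A (?\<beta> x))) = x" if "x \<in> H4" for x
    proof -
      have "refl (n + q) (refl n x) \<in> H4"
        using refl_in_H4[OF N.unit_shift refl_in_H4[OF N.unit that]] .
      thus ?thesis using that by (simp add: A \<beta>_H4 A_H4 conj_A N.parabolic_inverse)
    qed
    show "?\<beta> (B (?\<beta> (B x))) = x" if "x \<in> H4" for x
      using that isometry_maps_H4[OF M.isometry_parabolic]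
      by (simp add: B \<beta>_H4 conj_B M.parabolic_inverse)
    show "\<not> (\<forall>x\<in>H4. A (A x) = x)"
      using N.parabolic_not_involutive e0_in_H4 A A_H4 by metis
    show "\<not> (\<forall>x\<in>H4. B (B x) = x)"
      using M.parabolic_not_involutive e0_in_H4 B B_H4 by metis
  qed
qed

section \<open>Pure parabolic maps\<close>

lemma hyperplanes_meet_if_timelike_orth:
  assumes "mink w w < 0" "mink w n1 = 0" "mink w n2 = 0"
  shows "hyperplane n1 \<inter> hyperplane n2 \<noteq> {}"
proof -
  have "w$0 \<noteq> 0"
  proof
    assume "w$0 = 0"
    hence "mink w w = inner (space_part w) (space_part w)" by (simp add: mink_space_part)
    thus False using assms(1) inner_ge_zero[of "space_part w"] by linarith
  qed
  define c where "c = sgn (w$0) / sqrt (- mink w w)"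
  have "mink (c *\<^sub>R w) (c *\<^sub>R w) = -1"
    using assms(1) \<open>w$0 \<noteq> 0\<close> by (simp add: c_def power2_eq_square[symmetric] sgn_if)
  moreover have "(c *\<^sub>R w)$0 > 0"
    using assms(1) \<open>w$0 \<noteq> 0\<close> by (auto simp: c_def sgn_if divide_simps)
  ultimately have "c *\<^sub>R w \<in> hyperplane n1 \<inter> hyperplane n2"
    using assms(2,3) by (simp add: hyperplane_def H4_def)
  thus ?thesis by blast
qed

text \<open>If span {n1, n2} is space-like, its orthogonal complement contains a time-like
  vector w. When u = 0 the coefficient of u in w is a division by zero, i.e. 0.\<close>
lemma hyperplanes_meet_if_spacelike_span:
  assumes n1: "mink n1 n1 = 1" and n2: "mink n2 n2 = 1"
    and span: "(mink n1 n2)^2 < 1 \<or> n2 = mink n1 n2 *\<^sub>R n1"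
  shows "hyperplane n1 \<inter> hyperplane n2 \<noteq> {}"
proof -
  define c u d where "c = mink n1 n2" and "u = n2 - c *\<^sub>R n1" and "d = 1 - c^2"
  define a1 a2 where "a1 = mink e0 n1" and "a2 = mink e0 u"
  define w where "w = e0 - a1 *\<^sub>R n1 - (a2 / d) *\<^sub>R u"
  have n2_eq: "n2 = u + c *\<^sub>R n1" by (simp add: u_def)
  have u_n1: "mink u n1 = 0" "mink n1 u = 0"
    using n1 by (simp_all add: u_def c_def mink_commute[of n2 n1])
  have uu: "mink u u = d"
    using n1 n2 by (simp add: u_def d_def c_def mink_commute[of n2 n1] power2_eq_square)
  have d: "d > 0 \<or> u = 0" using span by (auto simp: d_def u_def c_def)
  have w_n1: "mink w n1 = 0" by (simp add: w_def a1_def n1 u_n1)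
  have w_u: "mink w u = 0" using d by (auto simp: w_def a2_def u_n1 uu)
  have w_n2: "mink w n2 = 0" using w_n1 w_u by (simp add: n2_eq)
  have "mink w w = mink e0 w - a1 * mink n1 w - (a2 / d) * mink u w"
    by (subst (1) w_def) simp
  also have "\<dots> = mink e0 w"
    using w_n1 w_u by (simp add: mink_commute[of n1 w] mink_commute[of u w])
  also have "\<dots> = -1 - a1^2 - a2^2 / d"
    using u_n1 by (simp add: w_def a1_def a2_def mink_e0_left e0_time power2_eq_square)
  also have "\<dots> < 0"
  proof -
    have "d \<ge> 0" using d uu by auto
    thus ?thesis using zero_le_power2[of a1] zero_le_power2[of a2] by (smt (verit) divide_nonneg_nonneg)
  qed
  finally show ?thesis using hyperplanes_meet_if_timelike_orth w_n1 w_n2 by blast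
qed

lemma common_ideal_point_mink_bound:
  assumes n1: "mink n1 n1 = 1" and n2: "mink n2 n2 = 1"
    and p: "p \<in> ideal_boundary n1" "p \<in> ideal_boundary n2"
  shows "(mink n1 n2)^2 \<le> 1"
proof -
  define c v where "c = mink n1 n2" and "v = n2 - c *\<^sub>R n1"
  have pp: "mink p p = 0" "p$0 = 1" "mink p n1 = 0" "mink p n2 = 0"
    using p by (auto simp: ideal_boundary_def ideal_pts_def)
  have "mink v p = 0" using pp by (simp add: v_def mink_commute[of n1 p] mink_commute[of n2 p])
  hence "mink v v \<ge> 0" using orth_null_nonneg[OF pp(1)] pp(2) by fastforce
  moreover have "mink v v = 1 - c^2"
    using n1 n2 by (simp add: v_def c_def mink_commute[of n2 n1] power2_eq_square)
  ultimately show ?thesis by (simp add: c_def)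
qed

lemma pure_parabolic_tangent_normals:
  assumes "pure_parabolic A"
  obtains n q where "tangent_normals n q" "\<forall>x\<in>H4. A x = parabolic n q x"
proof -
  obtain n1 n2 p where n1: "mink n1 n1 = 1" and n2: "mink n2 n2 = 1"
    and disj: "hyperplane n1 \<inter> hyperplane n2 = {}"
    and p: "p \<in> ideal_boundary n1" "p \<in> ideal_boundary n2"
    and A: "\<forall>x\<in>H4. A x = refl n1 (refl n2 x)"
    using assms unfolding pure_parabolic_def unit_spacelike_def by blast
  define c q where "c = mink n1 n2" and "q = c *\<^sub>R n2 - n1"
  have c: "c^2 = 1"
    using hyperplanes_meet_if_spacelike_span[OF n1 n2] common_ideal_point_mink_bound[OF n1 n2 p]
      disj by (fastforce simp: c_def)
  have "n2 \<noteq> c *\<^sub>R n1"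
    using hyperplanes_meet_if_spacelike_span[OF n1 n2] disj by (auto simp: c_def)
  moreover have "c *\<^sub>R q = n2 - c *\<^sub>R n1"
    using c by (simp add: q_def power2_eq_square scaleR_right_diff_distrib)
  ultimately have "q \<noteq> 0" by auto
  hence "tangent_normals n1 q"
    using n1 n2 c by unfold_locales
      (auto simp: q_def c_def mink_commute[of n2 n1] power2_eq_square algebra_simps)
  moreover have "refl (n1 + q) = refl n2"
    using refl_scaleR_unit[OF c] by (simp add: q_def)
  ultimately show ?thesis using A that by (simp add: parabolic_def)
qed

theorem theorem7p2:
  assumes "pure_parabolic A" and "pure_parabolic B"
  shows "linked A B"
proof -
  obtain n q where nq: "tangent_normals n q" and A: "\<forall>x\<in>H4. A x = parabolic n q x"
    using pure_parabolic_tangent_normals[OF assms(1)] .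
  obtain m r where mr: "tangent_normals m r" and B: "\<forall>x\<in>H4. B x = parabolic m r x"
    using pure_parabolic_tangent_normals[OF assms(2)] .
  obtain v d where "null_frame q v" "r = d *\<^sub>R q \<or> r = d *\<^sub>R v"
    using exists_null_frame nq mr unfolding tangent_normals_def by blast
  thus ?thesis
    using linked_if_common_half_turn[OF nq mr _ _ _ A B, of q v 1] by simp
qed

end
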